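(* Let $u:\Sigma\to M$ be a smooth $(j,J)$-holomorphic map and $z_0\in\Sigma$ with $j^ku(z_0)=0$ for some $k\ge 1$. Let $z=s+it$ be a complex coordinate on $\Sigma$ centered at $z_0$ and $(w_1,\dots,w_n)$, $w_m=x_m+\sqrt{-1}y_m$, coordinates on $M$ centered at $p_0=u(z_0)$ with $J\,\partial/\partial x_m|_{p_0}=\partial/\partial y_m|_{p_0}$ and $J\,\partial/\partial y_m|_{p_0}=-\partial/\partial x_m|_{p_0}$ for all $m$. Then $$u(z)=\vec a_{k+1}z^{k+1}+o(|z|^{k+1})$$ for some $\vec a_{k+1}\in T_{p_0}M\cong\mathbb C^n$. Equivalently, $d^{k+1}u(z_0)=\vec a\cdot dz^{\otimes(k+1)}$ with $\vec a\in T_{u(z_0)}M$. In particular the principal jet of $u$ at $z_0$ is holomorphic (lies in $H^{(k+1,0)}_{(z_0,u(z_0))}$), and at every point of $\Sigma$ the ramification degree of $u$ equals its holomorphic ramification degree.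
   Context: $(M,J)$ is an almost complex manifold of real dimension $2n$, $(\Sigma,j)$ a Riemann surface. $u$ is $(j,J)$-holomorphic if $J\circ du=du\circ j$. For a smooth map $u$ and $z\in\Sigma$, $j^ku(z)=0$ means that all derivatives of $u$ of orders $1,\dots,k$ vanish at $z$ (in local coordinates; this condition is coordinate independent). When $j^ku(z)=0$, the $(k+1)$-st derivative $d^{k+1}u(z)$ is a well-defined symmetric $(k+1)$-linear map $T_z\Sigma\to T_{u(z)}M$. The space $\mathrm{Sym}^\ell(T_z\Sigma,T_xM)$ of symmetric $\ell$-linear maps splits, relative to $(j_z,J_x)$, into the holomorphic part $H^{(\ell,0)}_{(z,x)}$ (maps that are complex multilinear, i.e. $L(jv_1,v_2,\dots)=J_xL(v_1,v_2,\dots)$), the antiholomorphic part and mixed parts; $\pi^{hol}$ denotes projection onto $H^{(\ell,0)}$. The ramification degree of $u$ at $z$ is the $k$ with $j^ku(z)=0$, $j^{k+1}u(z)\neq0$ (degree $0$ at immersed points), and $j^{k+1}u(z)$ is then called the principal jet. The holomorphic ramification degree is defined the same way using the holomorphic jets $j^\ell_{hol}u(z)=(\pi^{hol}(d^mu(z)))_{m\le\ell}$ instead of $j^\ell u(z)$. *)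

theory Defs
  imports "HOL-Analysis.Analysis"
begin

fun iter_deriv :: "('a::real_normed_vector \<Rightarrow> 'b::real_normed_vector) \<Rightarrow> 'a list \<Rightarrow> 'a \<Rightarrow> 'b" where
  "iter_deriv f [] = f"
| "iter_deriv f (v # vs) = (\<lambda>x. frechet_derivative (iter_deriv f vs) (at x) v)"

definition smooth_on :: "'a::real_normed_vector set \<Rightarrow> ('a \<Rightarrow> 'b::real_normed_vector) \<Rightarrow> bool" where
  "smooth_on S f \<longleftrightarrow> (\<forall>vs. iter_deriv f vs differentiable_on S)"

definition jet_vanishes :: "nat \<Rightarrow> ('a::real_normed_vector \<Rightarrow> 'b::real_normed_vector) \<Rightarrow> 'a \<Rightarrow> bool" where
  "jet_vanishes k f z \<longleftrightarrow> (\<forall>vs. 1 \<le> length vs \<and> length vs \<le> k \<longrightarrow> iter_deriv f vs z = 0)"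

definition almost_complex_on :: "'a::real_normed_vector set \<Rightarrow> ('a \<Rightarrow> 'a \<Rightarrow> 'a) \<Rightarrow> bool" where
  "almost_complex_on V J \<longleftrightarrow>
     (\<forall>p\<in>V. linear (J p) \<and> (\<forall>v. J p (J p v) = - v)) \<and> (\<forall>v. smooth_on V (\<lambda>p. J p v))"

text \<open>u is (j,J)-holomorphic on U (j = multiplication by i on C): J o du = du o j.\<close>
definition J_holomorphic_on :: "complex set \<Rightarrow> ('a::real_normed_vector \<Rightarrow> 'a \<Rightarrow> 'a) \<Rightarrow> (complex \<Rightarrow> 'a) \<Rightarrow> bool" where
  "J_holomorphic_on U J u \<longleftrightarrow>
     (\<forall>z\<in>U. \<forall>v. J (u z) (frechet_derivative u (at z) v) = frechet_derivative u (at z) (\<i> * v))"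

end

theory Submission
  imports Defs
begin

text \<open>Write \<open>D\<^sub>1 u\<close> and \<open>D\<^sub>\<i> u\<close> for the derivatives of \<open>u\<close> along \<open>1\<close> and \<open>\<i>\<close>. The holomorphicity
  equation \<open>D\<^sub>\<i> u = J(u) (D\<^sub>1 u)\<close> can be rewritten as
  \<open>D\<^sub>\<i> u - J(u z\<^sub>0) (D\<^sub>1 u) = (\<Sum>b. (D\<^sub>1 u \<bullet> b) (J(u) b - J(u z\<^sub>0) b))\<close>, a sum of products of a
  function vanishing to order \<open>k\<close> at \<open>z\<^sub>0\<close> with a function vanishing at \<open>z\<^sub>0\<close>. By the Leibniz rule
  all derivatives of order \<open>\<le> k\<close> of this sum vanish at \<open>z\<^sub>0\<close>, so the top jet \<open>T = d\<^bsup>k+1\<^esup>u(z\<^sub>0)\<close>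
  satisfies \<open>T(\<dots>, \<i>) = J(u z\<^sub>0) T(\<dots>, 1)\<close>. Together with the symmetry of iterated derivatives
  this makes \<open>T\<close> complex multilinear, i.e. \<open>T(v\<^sub>1, \<dots>, v\<^sub>k\<^sub>+\<^sub>1) = (k+1)! v\<^sub>1 \<cdots> v\<^sub>k\<^sub>+\<^sub>1 a\<close>.
  Subtracting the monomial \<open>z\<^bsup>k+1\<^esup> a\<close> leaves a map vanishing to order \<open>k + 2\<close>, which is
  \<open>o(|z|\<^bsup>k+1\<^esup>)\<close> by the mean value inequality.\<close>

section \<open>Calculus of iterated derivatives\<close>

lemma iter_deriv_append: "iter_deriv f (xs @ ys) = iter_deriv (iter_deriv f ys) xs"
  by (induction xs) auto

lemma frechet_derivative_cong_open:
  assumes "open U" "x \<in> U" "\<And>y. y \<in> U \<Longrightarrow> f y = g y"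
  shows "frechet_derivative f (at x) = frechet_derivative g (at x)"
proof -
  have "\<And>f'. (f has_derivative f') (at x) \<longleftrightarrow> (g has_derivative f') (at x)"
    using has_derivative_transform_within_open[OF _ assms(1,2)] assms(3) by metis
  then show ?thesis unfolding frechet_derivative_def by simp
qed

lemma iter_deriv_cong_open:
  assumes "open U" "\<And>y. y \<in> U \<Longrightarrow> f y = g y" "x \<in> U"
  shows "iter_deriv f vs x = iter_deriv g vs x"
  using assms(3)
proof (induction vs arbitrary: x)
  case Nil
  then show ?case using assms by simp
next
  case (Cons v vs)
  then show ?case
    using frechet_derivative_cong_open[OF assms(1) Cons.prems, of "iter_deriv f vs" "iter_deriv g vs"]
    by simp
qed

lemma differentiable_on_cong_open:
  assumes "open U" "\<And>y. y \<in> U \<Longrightarrow> f y = g y" "g differentiable_on U"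
  shows "f differentiable_on U"
  unfolding differentiable_on_eq_differentiable_at[OF assms(1)]
proof
  fix x
  assume "x \<in> U"
  with assms(1,3) obtain g' where "(g has_derivative g') (at x)"
    by (auto simp: differentiable_on_eq_differentiable_at differentiable_def)
  then have "(f has_derivative g') (at x)"
    by (rule has_derivative_transform_within_open[OF _ assms(1) \<open>x \<in> U\<close>]) (simp add: assms(2))
  then show "f differentiable at x" by (rule differentiableI)
qed

definition times_differentiable_on ::
    "nat \<Rightarrow> 'a::real_normed_vector set \<Rightarrow> ('a \<Rightarrow> 'b::real_normed_vector) \<Rightarrow> bool" where
  "times_differentiable_on n U f \<longleftrightarrow> (\<forall>ws. length ws < n \<longrightarrow> iter_deriv f ws differentiable_on U)"

lemma smooth_on_iff_times_differentiable_on: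
  "smooth_on U f \<longleftrightarrow> (\<forall>n. times_differentiable_on n U f)"
  unfolding smooth_on_def times_differentiable_on_def by (meson lessI)

lemma smooth_on_imp_times_differentiable_on: "smooth_on U f \<Longrightarrow> times_differentiable_on n U f"
  by (simp add: smooth_on_iff_times_differentiable_on)

lemma times_differentiable_on_mono:
  "times_differentiable_on n U f \<Longrightarrow> m \<le> n \<Longrightarrow> times_differentiable_on m U f"
  unfolding times_differentiable_on_def by auto

lemma times_differentiable_on_iter_deriv:
  "times_differentiable_on (Suc n) U f \<Longrightarrow> times_differentiable_on n U (iter_deriv f [v])"
  unfolding times_differentiable_on_def by (metis iter_deriv_append length_append_singleton not_less_eq)

lemma smooth_on_iter_deriv: "smooth_on U f \<Longrightarrow> smooth_on U (iter_deriv f vs)"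
  unfolding smooth_on_def by (metis iter_deriv_append)

lemma has_derivative_iter_deriv:
  assumes "open U" "times_differentiable_on n U f" "length ws < n" "x \<in> U"
  shows "(iter_deriv f ws has_derivative (\<lambda>v. iter_deriv f (v # ws) x)) (at x)"
proof -
  have "iter_deriv f ws differentiable at x"
    using assms unfolding times_differentiable_on_def differentiable_on_eq_differentiable_at[OF assms(1)]
    by blast
  then show ?thesis using frechet_derivative_works by fastforce
qed

lemma times_differentiable_on_imp_differentiable_on:
  "times_differentiable_on (Suc n) U f \<Longrightarrow> f differentiable_on U"
  unfolding times_differentiable_on_def by (metis iter_deriv.simps(1) list.size(3) zero_less_Suc)

lemma smooth_on_imp_differentiable_at: "open U \<Longrightarrow> smooth_on U f \<Longrightarrow> x \<in> U \<Longrightarrow> f differentiable at x"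
  using times_differentiable_on_imp_differentiable_on smooth_on_imp_times_differentiable_on
    differentiable_on_eq_differentiable_at by blast

lemma isCont_iter_deriv:
  assumes "open U" "times_differentiable_on n U g" "length ws < n" "x \<in> U"
  shows "isCont (iter_deriv g ws) x"
  using assms unfolding times_differentiable_on_def
  by (metis differentiable_imp_continuous_on continuous_on_eq_continuous_at)

lemma iter_deriv_add:
  assumes U: "open U" and f: "times_differentiable_on n U f" and g: "times_differentiable_on n U g"
  shows "length ws \<le> n \<Longrightarrow> x \<in> U \<Longrightarrow>
    iter_deriv (\<lambda>z. f z + g z) ws x = iter_deriv f ws x + iter_deriv g ws x"
proof (induction ws arbitrary: x)
  case Nil
  then show ?case by simp
next
  case (Cons v ws)
  have eq: "\<And>y. y \<in> U \<Longrightarrow> iter_deriv (\<lambda>z. f z + g z) ws y = iter_deriv f ws y + iter_deriv g ws y"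
    using Cons by simp
  have "((\<lambda>y. iter_deriv f ws y + iter_deriv g ws y) has_derivative
      (\<lambda>v. iter_deriv f (v # ws) x + iter_deriv g (v # ws) x)) (at x)"
    using has_derivative_iter_deriv[OF U f, of ws x] has_derivative_iter_deriv[OF U g, of ws x] Cons.prems
    by (intro has_derivative_add) auto
  from frechet_derivative_at[OF this]
  have "frechet_derivative (\<lambda>y. iter_deriv f ws y + iter_deriv g ws y) (at x)
      = (\<lambda>v. iter_deriv f (v # ws) x + iter_deriv g (v # ws) x)"
    by (rule sym)
  then show ?case using frechet_derivative_cong_open[OF U Cons.prems(2) eq] by simp
qed

lemma times_differentiable_on_add:
  assumes U: "open U" and f: "times_differentiable_on n U f" and g: "times_differentiable_on n U g"
  shows "times_differentiable_on n U (\<lambda>z. f z + g z)"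
  unfolding times_differentiable_on_def
proof (intro allI impI)
  fix ws :: "'a list"
  assume l: "length ws < n"
  have "(\<lambda>y. iter_deriv f ws y + iter_deriv g ws y) differentiable_on U"
    using f g l unfolding times_differentiable_on_def by (intro differentiable_on_add) auto
  then show "iter_deriv (\<lambda>z. f z + g z) ws differentiable_on U"
    using differentiable_on_cong_open[OF U, of "iter_deriv (\<lambda>z. f z + g z) ws"]
      iter_deriv_add[OF U f g, of ws] l by simp
qed

lemma iter_deriv_bounded_linear:
  assumes U: "open U" and f: "times_differentiable_on n U f" and L: "bounded_linear L"
  shows "length ws \<le> n \<Longrightarrow> x \<in> U \<Longrightarrow> iter_deriv (\<lambda>z. L (f z)) ws x = L (iter_deriv f ws x)"
proof (induction ws arbitrary: x)
  case Nil
  then show ?case by simp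
next
  case (Cons v ws)
  have eq: "\<And>y. y \<in> U \<Longrightarrow> iter_deriv (\<lambda>z. L (f z)) ws y = L (iter_deriv f ws y)"
    using Cons by simp
  have "((\<lambda>y. L (iter_deriv f ws y)) has_derivative (\<lambda>v. L (iter_deriv f (v # ws) x))) (at x)"
    using has_derivative_iter_deriv[OF U f, of ws x] Cons.prems
    by (intro bounded_linear.has_derivative[OF L]) auto
  from frechet_derivative_at[OF this]
  have "frechet_derivative (\<lambda>y. L (iter_deriv f ws y)) (at x) = (\<lambda>v. L (iter_deriv f (v # ws) x))"
    by (rule sym)
  then show ?case using frechet_derivative_cong_open[OF U Cons.prems(2) eq] by simp
qed

lemma times_differentiable_on_bounded_linear:
  assumes U: "open U" and f: "times_differentiable_on n U f" and L: "bounded_linear L"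
  shows "times_differentiable_on n U (\<lambda>z. L (f z))"
  unfolding times_differentiable_on_def
proof (intro allI impI)
  fix ws :: "'a list"
  assume l: "length ws < n"
  have "(\<lambda>y. L (iter_deriv f ws y)) differentiable_on U"
    using f l unfolding times_differentiable_on_def differentiable_on_def differentiable_def
    by (metis bounded_linear.has_derivative[OF L])
  then show "iter_deriv (\<lambda>z. L (f z)) ws differentiable_on U"
    using differentiable_on_cong_open[OF U, of "iter_deriv (\<lambda>z. L (f z)) ws"]
      iter_deriv_bounded_linear[OF U f L, of ws] l by simp
qed

lemma iter_deriv_const: "iter_deriv (\<lambda>z. c) ws = (\<lambda>z. if ws = [] then c else 0)"
  by (induction ws) auto

lemma times_differentiable_on_const: "times_differentiable_on n U (\<lambda>z. c)"
  unfolding times_differentiable_on_def iter_deriv_const by auto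

lemma times_differentiable_on_sum:
  assumes U: "open U" and "finite S" and "\<And>b. b \<in> S \<Longrightarrow> times_differentiable_on n U (f b)"
  shows "times_differentiable_on n U (\<lambda>z. \<Sum>b\<in>S. f b z)"
  using assms(2,3)
  by (induction S rule: finite_induct)
    (auto simp: times_differentiable_on_const intro!: times_differentiable_on_add[OF U])

lemma iter_deriv_sum:
  assumes U: "open U" and "finite S" and "\<And>b. b \<in> S \<Longrightarrow> times_differentiable_on n U (f b)"
    and "length ws \<le> n" "x \<in> U"
  shows "iter_deriv (\<lambda>z. \<Sum>b\<in>S. f b z) ws x = (\<Sum>b\<in>S. iter_deriv (f b) ws x)"
  using assms(2,3)
proof (induction S rule: finite_induct)
  case empty
  then show ?case by (simp add: iter_deriv_const)
next
  case (insert b S)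
  then have "iter_deriv (\<lambda>z. f b z + (\<Sum>b\<in>S. f b z)) ws x
      = iter_deriv (f b) ws x + iter_deriv (\<lambda>z. \<Sum>b\<in>S. f b z) ws x"
    using assms(4,5) by (intro iter_deriv_add[OF U] times_differentiable_on_sum[OF U]) auto
  with insert show ?case by simp
qed

lemma smooth_on_add: "open U \<Longrightarrow> smooth_on U f \<Longrightarrow> smooth_on U g \<Longrightarrow> smooth_on U (\<lambda>z. f z + g z)"
  unfolding smooth_on_iff_times_differentiable_on using times_differentiable_on_add by blast

lemma smooth_on_const: "smooth_on U (\<lambda>z. c)"
  by (simp add: smooth_on_iff_times_differentiable_on times_differentiable_on_const)

lemma smooth_on_bounded_linear:
  "open U \<Longrightarrow> smooth_on U f \<Longrightarrow> bounded_linear L \<Longrightarrow> smooth_on U (\<lambda>z. L (f z))"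
  unfolding smooth_on_iff_times_differentiable_on using times_differentiable_on_bounded_linear by blast

lemma iter_deriv_scaleR_single:
  assumes U: "open U" and f: "times_differentiable_on (Suc n) U f"
    and g: "times_differentiable_on (Suc m) U g" and x: "x \<in> U"
  shows "iter_deriv (\<lambda>z. f z *\<^sub>R g z) [v] x = iter_deriv f [v] x *\<^sub>R g x + f x *\<^sub>R iter_deriv g [v] x"
proof -
  have "((\<lambda>z. f z *\<^sub>R g z) has_derivative
      (\<lambda>v. f x *\<^sub>R iter_deriv g [v] x + iter_deriv f [v] x *\<^sub>R g x)) (at x)"
    using has_derivative_iter_deriv[OF U f, of "[]" x] has_derivative_iter_deriv[OF U g, of "[]" x] x
    by (intro has_derivative_scaleR) auto
  from frechet_derivative_at[OF this]
  have "frechet_derivative (\<lambda>z. f z *\<^sub>R g z) (at x)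
      = (\<lambda>v. f x *\<^sub>R iter_deriv g [v] x + iter_deriv f [v] x *\<^sub>R g x)"
    by (rule sym)
  then show ?thesis by (simp add: add.commute)
qed

lemma times_differentiable_on_scaleR:
  assumes U: "open U"
  shows "times_differentiable_on n U f \<Longrightarrow> times_differentiable_on n U g \<Longrightarrow>
    times_differentiable_on n U (\<lambda>z. f z *\<^sub>R g z)"
proof (induction n arbitrary: f g)
  case 0
  then show ?case by (simp add: times_differentiable_on_def)
next
  case (Suc n)
  have fn: "times_differentiable_on n U f" and gn: "times_differentiable_on n U g"
    using Suc.prems times_differentiable_on_mono le_Suc_eq by blast+
  define A where "A = (\<lambda>v z. iter_deriv f [v] z *\<^sub>R g z)"
  define B where "B = (\<lambda>v z. f z *\<^sub>R iter_deriv g [v] z)"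
  have AB: "times_differentiable_on n U (\<lambda>z. A v z + B v z)" for v
  proof (rule times_differentiable_on_add[OF U])
    show "times_differentiable_on n U (A v)" unfolding A_def
      by (rule Suc.IH[OF times_differentiable_on_iter_deriv[OF Suc.prems(1)] gn])
    show "times_differentiable_on n U (B v)" unfolding B_def
      by (rule Suc.IH[OF fn times_differentiable_on_iter_deriv[OF Suc.prems(2)]])
  qed
  have eq: "\<And>y. y \<in> U \<Longrightarrow> iter_deriv (\<lambda>z. f z *\<^sub>R g z) [v] y = A v y + B v y" for v
    unfolding A_def B_def using iter_deriv_scaleR_single[OF U Suc.prems] by simp
  show ?case unfolding times_differentiable_on_def
  proof (intro allI impI)
    fix ws :: "'a list"
    assume l: "length ws < Suc n"
    show "iter_deriv (\<lambda>z. f z *\<^sub>R g z) ws differentiable_on U"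
    proof (cases ws rule: rev_exhaust)
      case Nil
      have "f differentiable_on U" "g differentiable_on U"
        using Suc.prems times_differentiable_on_imp_differentiable_on by blast+
      then show ?thesis using Nil by (simp add: differentiable_on_scaleR)
    next
      case (snoc ws' v)
      have "\<And>y. y \<in> U \<Longrightarrow> iter_deriv (\<lambda>z. f z *\<^sub>R g z) ws y = iter_deriv (\<lambda>z. A v z + B v z) ws' y"
        using iter_deriv_cong_open[OF U eq] snoc by (simp add: iter_deriv_append)
      moreover have "iter_deriv (\<lambda>z. A v z + B v z) ws' differentiable_on U"
        using AB l snoc unfolding times_differentiable_on_def by simp
      ultimately show ?thesis using differentiable_on_cong_open[OF U] by blast
    qed
  qed
qed

lemma smooth_on_scaleR:
  "open U \<Longrightarrow> smooth_on U f \<Longrightarrow> smooth_on U g \<Longrightarrow> smooth_on U (\<lambda>z. f z *\<^sub>R g z)"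
  unfolding smooth_on_iff_times_differentiable_on using times_differentiable_on_scaleR by blast

lemma linear_euclidean_expansion:
  fixes f :: "'c::euclidean_space \<Rightarrow> 'b::real_vector"
  assumes "linear f"
  shows "f x = (\<Sum>i\<in>Basis. (x \<bullet> i) *\<^sub>R f i)"
proof -
  interpret linear f by fact
  have "f x = f (\<Sum>i\<in>Basis. (x \<bullet> i) *\<^sub>R i)" by (simp add: euclidean_representation)
  also have "\<dots> = (\<Sum>i\<in>Basis. (x \<bullet> i) *\<^sub>R f i)" by (simp add: sum scale)
  finally show ?thesis .
qed

lemma iter_deriv_compose_single:
  fixes u :: "'a::real_normed_vector \<Rightarrow> 'c::euclidean_space" and F :: "'c \<Rightarrow> 'b::real_normed_vector"
  assumes U: "open U" and V: "open V" and uUV: "u ` U \<subseteq> V"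
    and u: "times_differentiable_on (Suc n) U u" and F: "times_differentiable_on (Suc m) V F"
    and x: "x \<in> U"
  shows "iter_deriv (\<lambda>z. F (u z)) [v] x
    = (\<Sum>b\<in>Basis. (iter_deriv u [v] x \<bullet> b) *\<^sub>R iter_deriv F [b] (u x))"
proof -
  have du: "(u has_derivative (\<lambda>v. iter_deriv u [v] x)) (at x)"
    using has_derivative_iter_deriv[OF U u, of "[]" x] x by simp
  have dF: "(F has_derivative (\<lambda>v. iter_deriv F [v] (u x))) (at (u x))"
    using has_derivative_iter_deriv[OF V F, of "[]" "u x"] uUV x by auto
  have "((\<lambda>z. F (u z)) has_derivative (\<lambda>v. iter_deriv F [iter_deriv u [v] x] (u x))) (at x)"
    using diff_chain_at[OF du dF] unfolding comp_def .
  from frechet_derivative_at[OF this]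
  have "iter_deriv (\<lambda>z. F (u z)) [v] x = iter_deriv F [iter_deriv u [v] x] (u x)"
    by (simp only: iter_deriv.simps) (drule fun_cong[of _ _ v], simp)
  also have "\<dots> = (\<Sum>b\<in>Basis. (iter_deriv u [v] x \<bullet> b) *\<^sub>R iter_deriv F [b] (u x))"
    by (rule linear_euclidean_expansion[OF has_derivative_linear[OF dF]])
  finally show ?thesis .
qed

lemma times_differentiable_on_compose:
  fixes u :: "'a::real_normed_vector \<Rightarrow> 'c::euclidean_space"
  assumes U: "open U" and V: "open V" and uUV: "u ` U \<subseteq> V" and u: "smooth_on U u"
  shows "smooth_on V F \<Longrightarrow> times_differentiable_on n U (\<lambda>z. F (u z))"
proof (induction n arbitrary: F)
  case 0
  then show ?case by (simp add: times_differentiable_on_def)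
next
  case (Suc n)
  define G where "G = (\<lambda>v z. \<Sum>b\<in>Basis. (iter_deriv u [v] z \<bullet> b) *\<^sub>R iter_deriv F [b] (u z))"
  have G: "times_differentiable_on n U (G v)" for v
    unfolding G_def
  proof (intro times_differentiable_on_sum[OF U finite_Basis] times_differentiable_on_scaleR[OF U])
    show "times_differentiable_on n U (\<lambda>z. iter_deriv u [v] z \<bullet> b)" for b :: 'c
      using times_differentiable_on_bounded_linear[OF U _ bounded_linear_inner_left]
        smooth_on_imp_times_differentiable_on smooth_on_iter_deriv[OF u] by blast
    show "times_differentiable_on n U (\<lambda>z. iter_deriv F [b] (u z))" for b :: 'c
      using Suc smooth_on_iter_deriv by blast
  qed
  have eq: "\<And>y. y \<in> U \<Longrightarrow> iter_deriv (\<lambda>z. F (u z)) [v] y = G v y" for v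
    unfolding G_def using Suc.prems u
    by (intro iter_deriv_compose_single[OF U V uUV]) (auto intro: smooth_on_imp_times_differentiable_on)
  show ?case unfolding times_differentiable_on_def
  proof (intro allI impI)
    fix ws :: "'a list"
    assume l: "length ws < Suc n"
    show "iter_deriv (\<lambda>z. F (u z)) ws differentiable_on U"
    proof (cases ws rule: rev_exhaust)
      case Nil
      have "(\<lambda>z. F (u z)) differentiable at x" if x: "x \<in> U" for x
        using differentiable_chain_at[of u x F] smooth_on_imp_differentiable_at[OF U u x]
          smooth_on_imp_differentiable_at[OF V Suc.prems] uUV x by (auto simp: o_def)
      then show ?thesis using Nil U by (simp add: differentiable_on_eq_differentiable_at)
    next
      case (snoc ws' v)
      have "\<And>y. y \<in> U \<Longrightarrow> iter_deriv (\<lambda>z. F (u z)) ws y = iter_deriv (G v) ws' y"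
        using iter_deriv_cong_open[OF U eq] snoc by (simp add: iter_deriv_append)
      moreover have "iter_deriv (G v) ws' differentiable_on U"
        using G l snoc unfolding times_differentiable_on_def by simp
      ultimately show ?thesis using differentiable_on_cong_open[OF U] by blast
    qed
  qed
qed

lemma smooth_on_compose:
  fixes u :: "'a::real_normed_vector \<Rightarrow> 'c::euclidean_space" and F :: "'c \<Rightarrow> 'b::real_normed_vector"
  assumes "open U" "open V" "u ` U \<subseteq> V" "smooth_on U u" "smooth_on V F"
  shows "smooth_on U (\<lambda>z. F (u z))"
  using times_differentiable_on_compose[OF assms(1-4) assms(5)]
  by (simp add: smooth_on_iff_times_differentiable_on)

lemma iter_deriv_last_slot:
  fixes f :: "'a::real_normed_vector \<Rightarrow> 'b::real_normed_vector"
  assumes U: "open U" and f: "smooth_on U f" and x: "x \<in> U"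
  shows "iter_deriv f (ws @ [c *\<^sub>R v + d *\<^sub>R w]) x
    = c *\<^sub>R iter_deriv f (ws @ [v]) x + d *\<^sub>R iter_deriv f (ws @ [w]) x"
proof -
  let ?A = "iter_deriv f [v]" and ?B = "iter_deriv f [w]"
  have eq: "iter_deriv f [c *\<^sub>R v + d *\<^sub>R w] y = c *\<^sub>R ?A y + d *\<^sub>R ?B y" if "y \<in> U" for y
    using linear_frechet_derivative[OF smooth_on_imp_differentiable_at[OF U f that]]
    by (simp add: linear_add linear_cmul)
  have A: "times_differentiable_on (length ws) U ?A" and B: "times_differentiable_on (length ws) U ?B"
    using smooth_on_imp_times_differentiable_on smooth_on_iter_deriv[OF f] by blast+
  have cA: "times_differentiable_on (length ws) U (\<lambda>y. c *\<^sub>R ?A y)"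
    and dB: "times_differentiable_on (length ws) U (\<lambda>y. d *\<^sub>R ?B y)"
    using A B by (auto intro: times_differentiable_on_bounded_linear[OF U] bounded_linear_scaleR_right)
  have "iter_deriv f (ws @ [c *\<^sub>R v + d *\<^sub>R w]) x = iter_deriv (\<lambda>y. c *\<^sub>R ?A y + d *\<^sub>R ?B y) ws x"
    using iter_deriv_cong_open[OF U eq x] by (simp only: iter_deriv_append)
  also have "\<dots> = iter_deriv (\<lambda>y. c *\<^sub>R ?A y) ws x + iter_deriv (\<lambda>y. d *\<^sub>R ?B y) ws x"
    by (rule iter_deriv_add[OF U cA dB order.refl x])
  also have "\<dots> = c *\<^sub>R iter_deriv ?A ws x + d *\<^sub>R iter_deriv ?B ws x"
    using iter_deriv_bounded_linear[OF U A bounded_linear_scaleR_right order.refl x]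
      iter_deriv_bounded_linear[OF U B bounded_linear_scaleR_right order.refl x] by simp
  finally show ?thesis by (simp only: iter_deriv_append)
qed

lemma iter_deriv_last_slot_complex:
  fixes f :: "complex \<Rightarrow> 'b::real_normed_vector"
  assumes "open U" "smooth_on U f" "x \<in> U"
  shows "iter_deriv f (ws @ [v]) x
    = Re v *\<^sub>R iter_deriv f (ws @ [1]) x + Im v *\<^sub>R iter_deriv f (ws @ [\<i>]) x"
proof -
  have "v = Re v *\<^sub>R 1 + Im v *\<^sub>R \<i>" by (simp add: complex_eq_iff)
  then show ?thesis using iter_deriv_last_slot[OF assms, of ws "Re v" 1 "Im v" \<i>] by simp
qed

section \<open>Functions vanishing to finite order\<close>

definition vanishes_to_order ::
    "nat \<Rightarrow> ('a::real_normed_vector \<Rightarrow> 'b::real_normed_vector) \<Rightarrow> 'a \<Rightarrow> bool" where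
  "vanishes_to_order m f x \<longleftrightarrow> (\<forall>ws. length ws < m \<longrightarrow> iter_deriv f ws x = 0)"

lemma vanishes_to_order_Suc_iff_jet_vanishes:
  "vanishes_to_order (Suc k) f x \<longleftrightarrow> f x = 0 \<and> jet_vanishes k f x"
proof -
  have "length ws < Suc k \<longleftrightarrow> ws = [] \<or> 1 \<le> length ws \<and> length ws \<le> k" for ws :: "'a list"
    by (cases ws) auto
  then show ?thesis
    unfolding vanishes_to_order_def jet_vanishes_def by (metis iter_deriv.simps(1))
qed

lemma vanishes_to_order_iter_deriv:
  "vanishes_to_order m f x \<Longrightarrow> vanishes_to_order (m - 1) (iter_deriv f [v]) x"
  unfolding vanishes_to_order_def
proof (intro allI impI)
  fix ws :: "'a list"
  assume "\<forall>ws. length ws < m \<longrightarrow> iter_deriv f ws x = 0" "length ws < m - 1"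
  then have "iter_deriv f (ws @ [v]) x = 0" by simp
  then show "iter_deriv (iter_deriv f [v]) ws x = 0" by (simp only: iter_deriv_append)
qed

lemma iter_deriv_scaleR_vanishes:
  fixes f :: "'a::real_normed_vector \<Rightarrow> real" and g :: "'a \<Rightarrow> 'b::real_normed_vector"
  assumes U: "open U" and x: "x \<in> U"
    and "smooth_on U f" "smooth_on U g" "vanishes_to_order a f x" "vanishes_to_order b g x"
    and "length ws < a + b"
  shows "iter_deriv (\<lambda>z. f z *\<^sub>R g z) ws x = 0"
  using assms(3-)
proof (induction ws arbitrary: f g a b rule: rev_induct)
  case Nil
  then have "f x = 0 \<or> g x = 0"
    unfolding vanishes_to_order_def by (metis iter_deriv.simps(1) list.size(3) add_is_0 gr0I)
  then show ?case by auto
next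
  case (snoc v ws)
  have sf: "smooth_on U f" and sg: "smooth_on U g" by fact+
  let ?A = "\<lambda>z. iter_deriv f [v] z *\<^sub>R g z" and ?B = "\<lambda>z. f z *\<^sub>R iter_deriv g [v] z"
  have A: "smooth_on U ?A" and B: "smooth_on U ?B"
    using smooth_on_scaleR[OF U smooth_on_iter_deriv[OF sf, of "[v]"] sg]
      smooth_on_scaleR[OF U sf smooth_on_iter_deriv[OF sg, of "[v]"]] by auto
  have eq: "iter_deriv (\<lambda>z. f z *\<^sub>R g z) [v] y = ?A y + ?B y" if "y \<in> U" for y
    using iter_deriv_scaleR_single[OF U smooth_on_imp_times_differentiable_on[OF sf]
        smooth_on_imp_times_differentiable_on[OF sg] that] .
  have "iter_deriv (\<lambda>z. f z *\<^sub>R g z) (ws @ [v]) x = iter_deriv (\<lambda>z. ?A z + ?B z) ws x"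
    using iter_deriv_cong_open[OF U eq x] by (simp add: iter_deriv_append)
  also have "\<dots> = iter_deriv ?A ws x + iter_deriv ?B ws x"
    using A B x by (intro iter_deriv_add[OF U] smooth_on_imp_times_differentiable_on) auto
  also have "iter_deriv ?A ws x = 0"
  proof (rule snoc.IH)
    show "smooth_on U (iter_deriv f [v])" by (rule smooth_on_iter_deriv[OF sf])
    show "vanishes_to_order (a - 1) (iter_deriv f [v]) x"
      by (rule vanishes_to_order_iter_deriv[OF snoc.prems(3)])
    show "length ws < a - 1 + b" using snoc.prems(5) by simp
  qed (use snoc.prems in auto)
  also have "iter_deriv ?B ws x = 0"
  proof (rule snoc.IH)
    show "smooth_on U (iter_deriv g [v])" by (rule smooth_on_iter_deriv[OF sg])
    show "vanishes_to_order (b - 1) (iter_deriv g [v]) x"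
      by (rule vanishes_to_order_iter_deriv[OF snoc.prems(4)])
    show "length ws < a + (b - 1)" using snoc.prems(5) by simp
  qed (use snoc.prems in auto)
  finally show ?case by simp
qed

lemma little_o_power_at_0_iff:
  fixes g :: "'a::real_normed_vector \<Rightarrow> 'b::real_normed_vector"
  assumes "g 0 = 0"
  shows "((\<lambda>z. norm (g z) / norm z ^ m) \<longlongrightarrow> 0) (at 0)
    \<longleftrightarrow> (\<forall>e>0. \<exists>d>0. \<forall>z. norm z < d \<longrightarrow> norm (g z) \<le> e * norm z ^ m)"
proof
  assume lim: "((\<lambda>z. norm (g z) / norm z ^ m) \<longlongrightarrow> 0) (at 0)"
  show "\<forall>e>0. \<exists>d>0. \<forall>z. norm z < d \<longrightarrow> norm (g z) \<le> e * norm z ^ m"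
  proof (intro allI impI)
    fix e :: real
    assume "e > 0"
    with lim obtain d where "d > 0" and d: "\<And>z. z \<noteq> 0 \<Longrightarrow> norm z < d \<Longrightarrow> norm (g z) / norm z ^ m < e"
      unfolding LIM_def dist_norm by fastforce
    have "norm (g z) \<le> e * norm z ^ m" if "norm z < d" for z
      using d[OF _ that] assms \<open>e > 0\<close> by (cases "z = 0") (auto simp: divide_less_eq)
    with \<open>d > 0\<close> show "\<exists>d>0. \<forall>z. norm z < d \<longrightarrow> norm (g z) \<le> e * norm z ^ m" by blast
  qed
next
  assume bound: "\<forall>e>0. \<exists>d>0. \<forall>z. norm z < d \<longrightarrow> norm (g z) \<le> e * norm z ^ m"
  show "((\<lambda>z. norm (g z) / norm z ^ m) \<longlongrightarrow> 0) (at 0)"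
    unfolding LIM_def dist_norm
  proof (intro allI impI)
    fix e :: real
    assume "e > 0"
    with bound obtain d where "d > 0" and d: "\<And>z. norm z < d \<Longrightarrow> norm (g z) \<le> e / 2 * norm z ^ m"
      by (meson half_gt_zero)
    have "norm (norm (g z) / norm z ^ m - 0) < e" if "z \<noteq> 0" "norm (z - 0) < d" for z
    proof -
      have "norm z ^ m > 0" using that by simp
      then have "norm (g z) / norm z ^ m \<le> e / 2"
        using d[of z] that by (simp add: pos_divide_le_eq)
      then have "norm (g z) / norm z ^ m < e" using \<open>e > 0\<close> by linarith
      then show ?thesis by simp
    qed
    with \<open>d > 0\<close> show "\<exists>d>0. \<forall>z. z \<noteq> 0 \<and> norm (z - 0) < d \<longrightarrow> norm (norm (g z) / norm z ^ m - 0) < e"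
      by blast
  qed
qed

lemma norm_le_partial_derivatives_bound:
  fixes g :: "complex \<Rightarrow> 'b::real_normed_vector"
  assumes U: "open U" and g: "smooth_on U g" and sub: "cball 0 (norm z) \<subseteq> U"
    and bound: "\<And>y. norm y \<le> norm z \<Longrightarrow>
      norm (iter_deriv g [1] y) \<le> B \<and> norm (iter_deriv g [\<i>] y) \<le> B"
  shows "norm (g z - g 0) \<le> 2 * B * norm z"
proof -
  let ?S = "cball (0::complex) (norm z)"
  have der: "(g has_derivative (\<lambda>w. iter_deriv g [w] y)) (at y within ?S)" if "y \<in> ?S" for y
    using has_derivative_at_withinI[OF has_derivative_iter_deriv[OF U
          smooth_on_imp_times_differentiable_on[OF g], of "[]" "Suc 0" y]] sub that by auto
  have "onorm (\<lambda>w. iter_deriv g [w] y) \<le> 2 * B" if "y \<in> ?S" for y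
  proof (rule onorm_le)
    fix w :: complex
    have B: "norm (iter_deriv g [1] y) \<le> B" "norm (iter_deriv g [\<i>] y) \<le> B"
      using bound that by auto
    have "norm (iter_deriv g [w] y) = norm (Re w *\<^sub>R iter_deriv g [1] y + Im w *\<^sub>R iter_deriv g [\<i>] y)"
      using iter_deriv_last_slot_complex[OF U g, of y "[]" w] sub that by auto
    also have "\<dots> \<le> \<bar>Re w\<bar> * norm (iter_deriv g [1] y) + \<bar>Im w\<bar> * norm (iter_deriv g [\<i>] y)"
      by (metis norm_scaleR norm_triangle_ineq)
    also have "\<dots> \<le> norm w * B + norm w * B"
      using B abs_Re_le_cmod[of w] abs_Im_le_cmod[of w] by (intro add_mono mult_mono) auto
    finally show "norm (iter_deriv g [w] y) \<le> 2 * B * norm w" by simp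
  qed
  from differentiable_bound[OF convex_cball der this, of z 0] show ?thesis by simp
qed

lemma vanishes_to_order_imp_little_o:
  fixes g :: "complex \<Rightarrow> 'b::real_normed_vector"
  assumes U: "open U" "0 \<in> U"
  shows "smooth_on U g \<Longrightarrow> vanishes_to_order (Suc m) g 0 \<Longrightarrow>
    ((\<lambda>z. norm (g z) / norm z ^ m) \<longlongrightarrow> 0) (at 0)"
proof (induction m arbitrary: g)
  case 0
  then have "g 0 = 0" by (simp add: vanishes_to_order_Suc_iff_jet_vanishes)
  moreover have "isCont g 0"
    using smooth_on_imp_differentiable_at[OF U(1) "0.prems"(1) U(2)] differentiable_imp_continuous_within
    by blast
  ultimately show ?case by (simp add: isCont_def tendsto_norm_zero)
next
  case (Suc m)
  let ?D1 = "iter_deriv g [1]" and ?Di = "iter_deriv g [\<i>]"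
  have D: "\<forall>e>0. \<exists>d>0. \<forall>z. norm z < d \<longrightarrow> norm (iter_deriv g [v] z) \<le> e * norm z ^ m" for v
  proof -
    have s: "smooth_on U (iter_deriv g [v])" by (rule smooth_on_iter_deriv[OF Suc.prems(1)])
    have f: "vanishes_to_order (Suc m) (iter_deriv g [v]) 0"
      using vanishes_to_order_iter_deriv[OF Suc.prems(2)] by simp
    then have "iter_deriv g [v] 0 = 0" using vanishes_to_order_Suc_iff_jet_vanishes by blast
    then show ?thesis using Suc.IH[OF s f] little_o_power_at_0_iff by blast
  qed
  have g0: "g 0 = 0" using Suc.prems(2) vanishes_to_order_Suc_iff_jet_vanishes by blast
  show ?case unfolding little_o_power_at_0_iff[where g=g and m="Suc m", OF g0]
  proof (intro allI impI)
    fix e :: real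
    assume "e > 0"
    then obtain d1 d2 where "d1 > 0" "d2 > 0"
      and d1: "\<And>y. norm y < d1 \<Longrightarrow> norm (?D1 y) \<le> e / 2 * norm y ^ m"
      and d2: "\<And>y. norm y < d2 \<Longrightarrow> norm (?Di y) \<le> e / 2 * norm y ^ m"
      using D[of 1, rule_format, of "e / 2"] D[of \<i>, rule_format, of "e / 2"] by auto
    obtain r where "r > 0" "ball 0 r \<subseteq> U" using U open_contains_ball by blast
    define d where "d = min (min d1 d2) r"
    have "norm (g z) \<le> e * norm z ^ Suc m" if z: "norm z < d" for z
    proof -
      have mono: "e / 2 * norm y ^ m \<le> e / 2 * norm z ^ m" if "norm y \<le> norm z" for y
        using that \<open>e > 0\<close> by (intro mult_left_mono power_mono) auto
      have "cball 0 (norm z) \<subseteq> U"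
        using z \<open>ball 0 r \<subseteq> U\<close> unfolding d_def by (auto simp: subset_iff)
      moreover have "norm (?D1 y) \<le> e / 2 * norm z ^ m \<and> norm (?Di y) \<le> e / 2 * norm z ^ m"
        if "norm y \<le> norm z" for y
        using d1[of y] d2[of y] mono[OF that] that z unfolding d_def by auto
      ultimately have "norm (g z - g 0) \<le> 2 * (e / 2 * norm z ^ m) * norm z"
        by (rule norm_le_partial_derivatives_bound[OF U(1) Suc.prems(1)])
      then show ?thesis using g0 by (simp add: algebra_simps)
    qed
    moreover have "d > 0" using \<open>d1 > 0\<close> \<open>d2 > 0\<close> \<open>r > 0\<close> unfolding d_def by simp
    ultimately show "\<exists>d>0. \<forall>z. norm z < d \<longrightarrow> norm (g z) \<le> e * norm z ^ Suc m" by blast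
  qed
qed

section \<open>Symmetry of iterated derivatives\<close>

lemma has_real_derivative_along_line:
  fixes f :: "'a::real_normed_vector \<Rightarrow> real"
  assumes U: "open U" and sf: "times_differentiable_on (Suc n) U f" and y: "p + s *\<^sub>R a \<in> U"
  shows "((\<lambda>s. f (p + s *\<^sub>R a)) has_real_derivative iter_deriv f [a] (p + s *\<^sub>R a)) (at s)"
proof -
  let ?y = "p + s *\<^sub>R a"
  have d: "(f has_derivative (\<lambda>v. iter_deriv f [v] ?y)) (at ?y)"
    using has_derivative_iter_deriv[OF U sf, of "[]"] y by simp
  have l: "((\<lambda>s. p + s *\<^sub>R a) has_derivative (\<lambda>t. t *\<^sub>R a)) (at s)"
    by (auto intro!: derivative_eq_intros)
  have "((\<lambda>s. f (p + s *\<^sub>R a)) has_derivative (\<lambda>t. iter_deriv f [t *\<^sub>R a] ?y)) (at s)"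
    using diff_chain_at[OF l d] unfolding comp_def .
  moreover have "\<And>t. t * iter_deriv f [a] ?y = iter_deriv f [t *\<^sub>R a] ?y"
    using linear_cmul[OF has_derivative_linear[OF d]] by simp
  ultimately show ?thesis by (rule has_derivative_imp_has_field_derivative)
qed

lemma second_difference_mean_value:
  fixes g :: "'a::real_normed_vector \<Rightarrow> real"
  assumes U: "open U" and g: "times_differentiable_on 3 U g" and h: "h > 0"
    and inU: "\<And>s t. 0 \<le> s \<Longrightarrow> s \<le> h \<Longrightarrow> 0 \<le> t \<Longrightarrow> t \<le> h \<Longrightarrow> x + s *\<^sub>R a + t *\<^sub>R b \<in> U"
  shows "\<exists>s t. g (x + h *\<^sub>R a + h *\<^sub>R b) - g (x + h *\<^sub>R a) - g (x + h *\<^sub>R b) + g x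
      = h^2 * iter_deriv g [b, a] (x + s *\<^sub>R a + t *\<^sub>R b) \<and> 0 \<le> s \<and> s \<le> h \<and> 0 \<le> t \<and> t \<le> h"
proof -
  have g1: "times_differentiable_on (Suc 0) U g"
    using times_differentiable_on_mono[OF g] by simp
  have ga: "times_differentiable_on (Suc 0) U (iter_deriv g [a])"
    using times_differentiable_on_iter_deriv[OF times_differentiable_on_mono[OF g]] by simp
  define \<psi> where "\<psi> = (\<lambda>s. g ((x + h *\<^sub>R b) + s *\<^sub>R a) - g (x + s *\<^sub>R a))"
  have "DERIV \<psi> s :> iter_deriv g [a] ((x + h *\<^sub>R b) + s *\<^sub>R a) - iter_deriv g [a] (x + s *\<^sub>R a)"
    if "0 \<le> s" "s \<le> h" for s
  proof -
    have "(x + h *\<^sub>R b) + s *\<^sub>R a \<in> U" "x + s *\<^sub>R a \<in> U"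
      using inU[of s h] inU[of s 0] that h by (simp_all add: algebra_simps)
    then show ?thesis
      unfolding \<psi>_def by (intro DERIV_diff has_real_derivative_along_line[OF U g1])
  qed
  from MVT2[OF h this] obtain s where s: "0 < s" "s < h"
    and e1: "\<psi> h - \<psi> 0
      = (h - 0) * (iter_deriv g [a] ((x + h *\<^sub>R b) + s *\<^sub>R a) - iter_deriv g [a] (x + s *\<^sub>R a))"
    by auto
  define \<phi> where "\<phi> = (\<lambda>t. iter_deriv g [a] ((x + s *\<^sub>R a) + t *\<^sub>R b))"
  have "DERIV \<phi> t :> iter_deriv g [b, a] ((x + s *\<^sub>R a) + t *\<^sub>R b)" if "0 \<le> t" "t \<le> h" for t
    using has_real_derivative_along_line[OF U ga, of "x + s *\<^sub>R a" t b] inU[of s t] s that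
    unfolding \<phi>_def by simp
  from MVT2[OF h this] obtain t where t: "0 < t" "t < h"
    and e2: "\<phi> h - \<phi> 0 = (h - 0) * iter_deriv g [b, a] ((x + s *\<^sub>R a) + t *\<^sub>R b)"
    by auto
  have "g (x + h *\<^sub>R a + h *\<^sub>R b) - g (x + h *\<^sub>R a) - g (x + h *\<^sub>R b) + g x = \<psi> h - \<psi> 0"
    unfolding \<psi>_def by (simp add: algebra_simps)
  also have "\<dots> = h * (\<phi> h - \<phi> 0)" using e1 unfolding \<phi>_def by (simp add: algebra_simps)
  also have "\<dots> = h^2 * iter_deriv g [b, a] (x + s *\<^sub>R a + t *\<^sub>R b)"
    using e2 by (simp add: power2_eq_square)
  finally show ?thesis using s t by (intro exI[of _ s] exI[of _ t]) auto
qed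

lemma second_derivatives_agree_nearby:
  fixes g :: "'a::real_normed_vector \<Rightarrow> real"
  assumes U: "open U" and g: "times_differentiable_on 3 U g" and d: "d > 0" "ball x d \<subseteq> U"
  shows "\<exists>y1 y2. dist y1 x < d \<and> dist y2 x < d \<and> iter_deriv g [b, a] y1 = iter_deriv g [a, b] y2"
proof -
  define h where "h = d / (2 * (norm a + norm b + 1))"
  have h: "h > 0" unfolding h_def using d by (simp add: add_nonneg_pos)
  have close: "dist (x + s *\<^sub>R a + t *\<^sub>R b) x < d"
    if st: "0 \<le> s" "s \<le> h" "0 \<le> t" "t \<le> h" for s t :: real
  proof -
    have "dist (x + s *\<^sub>R a + t *\<^sub>R b) x = norm (s *\<^sub>R a + t *\<^sub>R b)"
      by (simp add: dist_norm)
    also have "\<dots> \<le> s * norm a + t * norm b"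
      using st norm_triangle_ineq[of "s *\<^sub>R a" "t *\<^sub>R b"] by simp
    also have "\<dots> \<le> h * norm a + h * norm b"
      using st by (intro add_mono mult_right_mono) auto
    also have "\<dots> < h * (norm a + norm b + 1)" using h by (simp add: algebra_simps)
    also have "\<dots> = d / 2"
      using add_nonneg_pos[of "norm a + norm b" 1] unfolding h_def by (simp add: field_simps)
    finally show ?thesis using d by simp
  qed
  have swap: "x + s *\<^sub>R b + t *\<^sub>R a = x + t *\<^sub>R a + s *\<^sub>R b" for s t
    by (simp add: algebra_simps)
  have inU: "x + s *\<^sub>R a + t *\<^sub>R b \<in> U"
    if "0 \<le> s" "s \<le> h" "0 \<le> t" "t \<le> h" for s t
    using close[OF that] d(2) by (auto simp: dist_commute)
  have inU': "x + t *\<^sub>R b + s *\<^sub>R a \<in> U"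
    if "0 \<le> s" "s \<le> h" "0 \<le> t" "t \<le> h" for s t
    by (subst swap) (rule inU[OF that])
  obtain s1 t1 where P1: "g (x + h *\<^sub>R a + h *\<^sub>R b) - g (x + h *\<^sub>R a) - g (x + h *\<^sub>R b) + g x
      = h^2 * iter_deriv g [b, a] (x + s1 *\<^sub>R a + t1 *\<^sub>R b)"
    and st1: "0 \<le> s1" "s1 \<le> h" "0 \<le> t1" "t1 \<le> h"
    using second_difference_mean_value[OF U g h inU] by blast
  obtain s2 t2 where P2: "g (x + h *\<^sub>R b + h *\<^sub>R a) - g (x + h *\<^sub>R b) - g (x + h *\<^sub>R a) + g x
      = h^2 * iter_deriv g [a, b] (x + s2 *\<^sub>R b + t2 *\<^sub>R a)"
    and st2: "0 \<le> s2" "s2 \<le> h" "0 \<le> t2" "t2 \<le> h"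
    using second_difference_mean_value[OF U g h inU'] by blast
  have "h^2 * iter_deriv g [b, a] (x + s1 *\<^sub>R a + t1 *\<^sub>R b)
      = h^2 * iter_deriv g [a, b] (x + s2 *\<^sub>R b + t2 *\<^sub>R a)"
    using P1 P2 arg_cong[OF swap[of h h], of g] by linarith
  then have "iter_deriv g [b, a] (x + s1 *\<^sub>R a + t1 *\<^sub>R b) = iter_deriv g [a, b] (x + s2 *\<^sub>R b + t2 *\<^sub>R a)"
    using h by simp
  moreover have "dist (x + s2 *\<^sub>R b + t2 *\<^sub>R a) x < d"
    using close[of t2 s2] st2 by (subst swap) simp
  ultimately show ?thesis using close[OF st1] by blast
qed

lemma iter_deriv_swap_real:
  fixes g :: "'a::real_normed_vector \<Rightarrow> real"
  assumes U: "open U" and g: "times_differentiable_on 3 U g" and x: "x \<in> U"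
  shows "iter_deriv g [b, a] x = iter_deriv g [a, b] x"
proof (rule ccontr)
  let ?F1 = "iter_deriv g [b, a]" and ?F2 = "iter_deriv g [a, b]"
  assume "?F1 x \<noteq> ?F2 x"
  define e where "e = \<bar>?F1 x - ?F2 x\<bar> / 2"
  have e: "e > 0" and e2: "\<bar>?F1 x - ?F2 x\<bar> = 2 * e"
    using \<open>?F1 x \<noteq> ?F2 x\<close> unfolding e_def by simp_all
  have "isCont ?F1 x" "isCont ?F2 x" by (rule isCont_iter_deriv[OF U g _ x], simp)+
  then obtain d1 d2 where "d1 > 0" "d2 > 0"
    and d1: "\<And>y. dist y x < d1 \<Longrightarrow> dist (?F1 y) (?F1 x) < e"
    and d2: "\<And>y. dist y x < d2 \<Longrightarrow> dist (?F2 y) (?F2 x) < e"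
    using e unfolding continuous_at_eps_delta by metis
  obtain r where "r > 0" "ball x r \<subseteq> U" using U x open_contains_ball by blast
  define d where "d = min (min d1 d2) r"
  have "d > 0" "ball x d \<subseteq> U"
    using \<open>d1 > 0\<close> \<open>d2 > 0\<close> \<open>r > 0\<close> \<open>ball x r \<subseteq> U\<close> unfolding d_def by auto
  then obtain y1 y2 where "dist y1 x < d" "dist y2 x < d" and eq: "?F1 y1 = ?F2 y2"
    using second_derivatives_agree_nearby[OF U g] by blast
  then have "dist y1 x < d1" "dist y2 x < d2" unfolding d_def by auto
  with d1 d2 have "dist (?F1 y1) (?F1 x) < e" "dist (?F2 y2) (?F2 x) < e" by auto
  then have "\<bar>?F1 x - ?F2 x\<bar> < 2 * e" using eq unfolding dist_real_def by linarith
  with e2 show False by linarith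
qed

lemma iter_deriv_swap:
  fixes G :: "'a::real_normed_vector \<Rightarrow> 'b::euclidean_space"
  assumes U: "open U" and sG: "times_differentiable_on 3 U G" and x: "x \<in> U"
  shows "iter_deriv G [b, a] x = iter_deriv G [a, b] x"
proof (rule euclidean_eqI)
  fix e :: 'b assume "e \<in> Basis"
  have L: "bounded_linear (\<lambda>v. v \<bullet> e)" by (rule bounded_linear_inner_left)
  have s: "times_differentiable_on 3 U (\<lambda>z. G z \<bullet> e)" by (rule times_differentiable_on_bounded_linear[OF U sG L])
  have "iter_deriv G [b, a] x \<bullet> e = iter_deriv (\<lambda>z. G z \<bullet> e) [b, a] x"
    using iter_deriv_bounded_linear[OF U sG L, of "[b, a]" x] x by simp
  also have "\<dots> = iter_deriv (\<lambda>z. G z \<bullet> e) [a, b] x" by (rule iter_deriv_swap_real[OF U s x])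
  also have "\<dots> = iter_deriv G [a, b] x \<bullet> e"
    using iter_deriv_bounded_linear[OF U sG L, of "[a, b]" x] x by simp
  finally show "iter_deriv G [b, a] x \<bullet> e = iter_deriv G [a, b] x \<bullet> e" .
qed

lemma iter_deriv_swap_adjacent:
  fixes f :: "'a::real_normed_vector \<Rightarrow> 'b::euclidean_space"
  assumes U: "open U" and sf: "smooth_on U f" and x: "x \<in> U"
  shows "iter_deriv f (ws1 @ a # b # ws2) x = iter_deriv f (ws1 @ b # a # ws2) x"
proof -
  have s3: "times_differentiable_on 3 U (iter_deriv f ws2)" using smooth_on_iter_deriv[OF sf] smooth_on_iff_times_differentiable_on by blast
  have eq: "\<And>y. y \<in> U \<Longrightarrow> iter_deriv (iter_deriv f ws2) [a, b] y = iter_deriv (iter_deriv f ws2) [b, a] y"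
    using iter_deriv_swap[OF U s3] by blast
  have "iter_deriv f (ws1 @ a # b # ws2) x = iter_deriv (iter_deriv (iter_deriv f ws2) [a, b]) ws1 x"
    using iter_deriv_append[of f ws1 "[a, b] @ ws2"] iter_deriv_append[of f "[a, b]" ws2] by simp
  also have "\<dots> = iter_deriv (iter_deriv (iter_deriv f ws2) [b, a]) ws1 x"
    by (rule iter_deriv_cong_open[OF U eq x])
  also have "\<dots> = iter_deriv f (ws1 @ b # a # ws2) x"
    using iter_deriv_append[of f ws1 "[b, a] @ ws2"] iter_deriv_append[of f "[b, a]" ws2] by simp
  finally show ?thesis .
qed

lemma iter_deriv_move_to_front:
  fixes f :: "'a::real_normed_vector \<Rightarrow> 'b::euclidean_space"
  assumes U: "open U" and sf: "smooth_on U f"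
  shows "x \<in> U \<Longrightarrow> iter_deriv f (ys1 @ a # zs) x = iter_deriv f (a # ys1 @ zs) x"
proof (induction ys1 arbitrary: x)
  case Nil then show ?case by simp
next
  case (Cons c ys1)
  have "iter_deriv f ((c # ys1) @ a # zs) x = frechet_derivative (iter_deriv f (ys1 @ a # zs)) (at x) c" by simp
  also have "\<dots> = frechet_derivative (iter_deriv f (a # ys1 @ zs)) (at x) c"
    using frechet_derivative_cong_open[OF U Cons.prems Cons.IH] by simp
  also have "\<dots> = iter_deriv f ([] @ c # a # ys1 @ zs) x" by simp
  also have "\<dots> = iter_deriv f ([] @ a # c # ys1 @ zs) x" by (rule iter_deriv_swap_adjacent[OF U sf Cons.prems])
  finally show ?case by simp
qed

lemma iter_deriv_mset_eq:
  fixes f :: "'a::real_normed_vector \<Rightarrow> 'b::euclidean_space"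
  assumes U: "open U" and sf: "smooth_on U f"
  shows "mset xs = mset ys \<Longrightarrow> x \<in> U \<Longrightarrow> iter_deriv f xs x = iter_deriv f ys x"
proof (induction xs arbitrary: ys x)
  case Nil then show ?case by simp
next
  case (Cons a xs)
  have "a \<in> set ys" using Cons.prems(1) by (metis list.set_intros(1) set_mset_mset)
  then obtain ys1 ys2 where ys: "ys = ys1 @ a # ys2" by (meson split_list)
  have ms: "mset xs = mset (ys1 @ ys2)" using Cons.prems(1) ys by simp
  have "iter_deriv f (a # xs) x = frechet_derivative (iter_deriv f xs) (at x) a" by simp
  also have "\<dots> = frechet_derivative (iter_deriv f (ys1 @ ys2)) (at x) a"
    using frechet_derivative_cong_open[OF U Cons.prems(2), of "iter_deriv f xs" "iter_deriv f (ys1 @ ys2)"]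
      Cons.IH[OF ms] by simp
  also have "\<dots> = iter_deriv f (a # ys1 @ ys2) x" by simp
  also have "\<dots> = iter_deriv f ys x" using iter_deriv_move_to_front[OF U sf Cons.prems(2)] ys by simp
  finally show ?case .
qed


section \<open>Complex multilinearity of the principal jet\<close>

lemma linear_smult_const: "linear (\<lambda>w::complex. w *s (a :: complex ^ 'n))"
  by (rule linearI) (simp_all add: vec_eq_iff algebra_simps)

lemma has_derivative_monomial_smult:
  "((\<lambda>z::complex. (c * z ^ m) *s (a :: complex ^ 'n)) has_derivative
     (\<lambda>v. (c * of_nat m * v * z ^ (m - 1)) *s a)) (at z)"
proof -
  have "((\<lambda>z. c * z ^ m) has_derivative (*) (c * (of_nat m * z ^ (m - 1)))) (at z)"
    using DERIV_cmult[OF DERIV_power[OF DERIV_ident, of m z UNIV], of c]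
    by (simp add: has_field_derivative_imp_has_derivative)
  from bounded_linear.has_derivative[OF linear_smult_const[THEN linear_conv_bounded_linear[THEN iffD1]] this]
  show ?thesis by (simp add: algebra_simps)
qed

lemma iter_deriv_monomial_smult:
  "iter_deriv (\<lambda>z::complex. (c * z ^ m) *s (a :: complex ^ 'n)) ws z =
     (c * (\<Prod>j<length ws. of_nat (m - j)) * prod_list ws * z ^ (m - length ws)) *s a"
proof (induction ws arbitrary: c m rule: rev_induct)
  case Nil
  then show ?case by simp
next
  case (snoc v ws)
  have "iter_deriv (\<lambda>z::complex. (c * z ^ m) *s a) [v] = (\<lambda>z. ((c * of_nat m * v) * z ^ (m - 1)) *s a)"
    using fun_cong[OF frechet_derivative_at[OF has_derivative_monomial_smult[of c m a]], of v]
    by (simp add: fun_eq_iff)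
  then have "iter_deriv (\<lambda>z::complex. (c * z ^ m) *s a) (ws @ [v]) z
      = ((c * of_nat m * v) * (\<Prod>j<length ws. of_nat (m - 1 - j)) * prod_list ws
          * z ^ (m - 1 - length ws)) *s a"
    using snoc.IH by (simp only: iter_deriv_append)
  moreover have "of_nat m * (\<Prod>j<length ws. of_nat (m - 1 - j)) = (\<Prod>j<Suc (length ws). (of_nat (m - j) :: complex))"
    by (simp add: prod.lessThan_Suc_shift del: prod.lessThan_Suc)
  ultimately show ?case by (simp add: algebra_simps)
qed

lemma smooth_on_monomial_smult: "smooth_on U (\<lambda>z::complex. (c * z ^ m) *s (a :: complex ^ 'n))"
  unfolding smooth_on_def iter_deriv_monomial_smult differentiable_on_def differentiable_def
  using has_derivative_monomial_smult has_derivative_at_withinI by blast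

lemma Re_Im_scaleR_eq_smult: "Re v *\<^sub>R y + Im v *\<^sub>R (\<i> *s y) = v *s (y :: complex ^ 'n)"
proof -
  have "v * y $ i = Re v *\<^sub>R y $ i + Im v *\<^sub>R (\<i> * y $ i)" for i
    by (simp add: scaleR_conv_of_real algebra_simps complex_eq_iff)
  then show ?thesis by (simp add: vec_eq_iff)
qed

lemma symmetric_multilinear_eq_prod_list:
  fixes T :: "complex list \<Rightarrow> complex ^ 'n"
  assumes perm: "\<And>xs ys. mset xs = mset ys \<Longrightarrow> T xs = T ys"
    and slot: "\<And>ws v. length ws = k \<Longrightarrow> T (ws @ [v]) = v *s T (ws @ [1])"
  shows "length vs \<le> Suc k \<Longrightarrow>
    T (vs @ replicate (Suc k - length vs) 1) = prod_list vs *s T (replicate (Suc k) 1)"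
proof (induction vs)
  case Nil
  then show ?case by simp
next
  case (Cons v vs)
  let ?r = "replicate (k - length vs) (1::complex)"
  have L: "length vs \<le> k" and r: "Suc k - length vs = Suc (k - length vs)" using Cons.prems by auto
  have "T ((v # vs) @ replicate (Suc k - length (v # vs)) 1) = T ((vs @ ?r) @ [v])"
    by (rule perm) simp
  also have "\<dots> = v *s T ((vs @ ?r) @ [1])" by (rule slot) (use L in simp)
  also have "T ((vs @ ?r) @ [1]) = T (vs @ replicate (Suc k - length vs) 1)"
    by (rule perm) (simp add: r)
  finally show ?case using Cons.IH L by (simp add: vector_smult_assoc)
qed

lemma linear_eq_i_smult:
  fixes L :: "complex ^ 'n \<Rightarrow> complex ^ 'n"
  assumes "linear L" and "\<forall>m. L (axis m 1) = axis m \<i> \<and> L (axis m \<i>) = - axis m 1"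
  shows "L = (\<lambda>x. \<i> *s x)"
proof (rule linear_eq_stdbasis[OF assms(1)])
  show "linear (\<lambda>x::complex ^ 'n. \<i> *s x)"
    by (rule linearI) (simp_all add: vec_eq_iff algebra_simps)
  fix b :: "complex ^ 'n"
  assume "b \<in> Basis"
  then obtain m u where "b = axis m u" "u = 1 \<or> u = \<i>"
    unfolding Basis_vec_def Basis_complex_def by auto
  moreover have "\<i> *s axis m 1 = axis m \<i>" "\<i> *s axis m \<i> = - axis m (1::complex)"
    by (simp_all add: vec_eq_iff axis_def)
  ultimately show "L b = \<i> *s b" using assms(2) by auto
qed

section \<open>Jets of \<open>J\<close>-holomorphic maps\<close>

lemma iter_deriv_J_holomorphic_last_slot:
  fixes u :: "complex \<Rightarrow> 'a::euclidean_space" and J :: "'a \<Rightarrow> 'a \<Rightarrow> 'a"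
  assumes U: "open U" and z0: "z0 \<in> U" and V: "open V" and uUV: "u ` U \<subseteq> V"
    and u: "smooth_on U u" and J: "almost_complex_on V J" and hol: "J_holomorphic_on U J u"
    and jet: "jet_vanishes k u z0" and ws: "length ws \<le> k"
  shows "iter_deriv u (ws @ [\<i>]) z0 = J (u z0) (iter_deriv u (ws @ [1]) z0)"
proof -
  let ?D1 = "iter_deriv u [1]" and ?Di = "iter_deriv u [\<i>]" and ?J0 = "J (u z0)"
  have linJ: "linear (J p)" if "p \<in> V" for p using J that unfolding almost_complex_on_def by blast
  have J0: "bounded_linear (\<lambda>v. - ?J0 v)"
    using linJ uUV z0 by (auto intro: bounded_linear_minus simp: linear_conv_bounded_linear)
  have D1: "smooth_on U ?D1" and Di: "smooth_on U ?Di" by (rule smooth_on_iter_deriv[OF u])+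
  define f where "f = (\<lambda>b z. ?D1 z \<bullet> b)"
  define g where "g = (\<lambda>b z. J (u z) b + - ?J0 b)"
  have f: "smooth_on U (f b)" "vanishes_to_order k (f b) z0" for b
  proof -
    show "smooth_on U (f b)"
      unfolding f_def by (rule smooth_on_bounded_linear[OF U D1 bounded_linear_inner_left])
    have "iter_deriv (f b) zs z0 = iter_deriv u (zs @ [1]) z0 \<bullet> b" if "length zs < k" for zs
      unfolding f_def iter_deriv_append
      by (rule iter_deriv_bounded_linear[OF U smooth_on_imp_times_differentiable_on[OF D1]
            bounded_linear_inner_left order.refl z0])
    then show "vanishes_to_order k (f b) z0"
      using jet unfolding vanishes_to_order_def jet_vanishes_def by simp
  qed
  have g: "smooth_on U (g b)" "vanishes_to_order 1 (g b) z0" for b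
  proof -
    have "smooth_on V (\<lambda>p. J p b)" using J unfolding almost_complex_on_def by blast
    from smooth_on_add[OF U smooth_on_compose[OF U V uUV u this] smooth_on_const]
    show "smooth_on U (g b)" unfolding g_def .
    show "vanishes_to_order 1 (g b) z0" unfolding g_def vanishes_to_order_def by simp
  qed
  have decomp: "?Di z + - ?J0 (?D1 z) = (\<Sum>b\<in>Basis. f b z *\<^sub>R g b z)" if "z \<in> U" for z
  proof -
    have "?Di z = J (u z) (?D1 z)"
      using hol that unfolding J_holomorphic_on_def by (metis iter_deriv.simps mult_1_right)
    moreover have "u z \<in> V" "u z0 \<in> V" using uUV z0 that by auto
    ultimately show ?thesis
      using linear_euclidean_expansion[OF linJ[OF \<open>u z \<in> V\<close>], of "?D1 z"]
        linear_euclidean_expansion[OF linJ[OF \<open>u z0 \<in> V\<close>], of "?D1 z"]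
      unfolding f_def g_def by (simp add: scaleR_diff_right sum_subtractf)
  qed
  have s1: "times_differentiable_on (length ws) U ?D1" and s2: "times_differentiable_on (length ws) U ?Di"
    using D1 Di by (auto intro: smooth_on_imp_times_differentiable_on)
  have "iter_deriv (\<lambda>z. ?Di z + - ?J0 (?D1 z)) ws z0
      = iter_deriv (\<lambda>z. \<Sum>b\<in>Basis. f b z *\<^sub>R g b z) ws z0"
    by (rule iter_deriv_cong_open[OF U decomp z0])
  also have "\<dots> = (\<Sum>b\<in>Basis. iter_deriv (\<lambda>z. f b z *\<^sub>R g b z) ws z0)"
    using smooth_on_scaleR[OF U f(1) g(1)]
    by (intro iter_deriv_sum[OF U finite_Basis smooth_on_imp_times_differentiable_on order.refl z0])
  also have "\<dots> = 0"
    using iter_deriv_scaleR_vanishes[OF U z0 f(1) g(1) f(2) g(2)] ws by simp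
  finally have "iter_deriv ?Di ws z0 + - ?J0 (iter_deriv ?D1 ws z0) = 0"
    by (subst (asm) iter_deriv_add[OF U s2 times_differentiable_on_bounded_linear[OF U s1 J0] order.refl z0],
        subst (asm) iter_deriv_bounded_linear[OF U s1 J0 order.refl z0])
  then show ?thesis by (simp add: iter_deriv_append algebra_simps)
qed

lemma iter_deriv_J_holomorphic_eq_prod_list:
  fixes u :: "complex \<Rightarrow> complex ^ 'n" and J :: "complex ^ 'n \<Rightarrow> complex ^ 'n \<Rightarrow> complex ^ 'n"
  assumes U: "open U" and z0: "z0 \<in> U" and "open V" "u ` U \<subseteq> V"
    and u: "smooth_on U u" and "almost_complex_on V J" "J_holomorphic_on U J u"
    and "jet_vanishes k u z0" and Ji: "\<And>v. J (u z0) v = \<i> *s v" and vs: "length vs = Suc k"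
  shows "iter_deriv u vs z0 = prod_list vs *s iter_deriv u (replicate (Suc k) 1) z0"
proof -
  let ?T = "\<lambda>ws. iter_deriv u ws z0"
  have slot: "?T (ws @ [v]) = v *s ?T (ws @ [1])" if "length ws = k" for ws v
  proof -
    have "?T (ws @ [v]) = Re v *\<^sub>R ?T (ws @ [1]) + Im v *\<^sub>R ?T (ws @ [\<i>])"
      by (rule iter_deriv_last_slot_complex[OF U u z0])
    also have "?T (ws @ [\<i>]) = \<i> *s ?T (ws @ [1])"
      using iter_deriv_J_holomorphic_last_slot[OF assms(1-8), of ws] that Ji by simp
    finally show ?thesis by (simp add: Re_Im_scaleR_eq_smult)
  qed
  have "?T (vs @ replicate (Suc k - length vs) 1) = prod_list vs *s ?T (replicate (Suc k) 1)"
    by (rule symmetric_multilinear_eq_prod_list[of ?T k vs,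
          OF iter_deriv_mset_eq[OF U u _ z0] slot eq_imp_le[OF vs]])
  then show ?thesis using vs by simp
qed

lemma prod_lessThan_diff_eq_fact:
  "(\<Prod>j<n. of_nat (n - j)) = (fact n :: 'a::{comm_semiring_1,semiring_char_0})"
proof -
  have "(fact n :: 'a) = of_nat (\<Prod>i = 0..<n. n - i)" by (rule fact_prod_rev)
  then show ?thesis by (simp add: of_nat_prod atLeast0LessThan)
qed

lemma little_o_of_homogeneous_jet:
  fixes u :: "complex \<Rightarrow> complex ^ 'n"
  assumes U: "open U" "0 \<in> U" and u: "smooth_on U u" and u0: "u 0 = 0" and jet: "jet_vanishes k u 0"
    and top: "\<And>vs. length vs = Suc k \<Longrightarrow> iter_deriv u vs 0 = (of_nat (fact (Suc k)) * prod_list vs) *s a"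
  shows "((\<lambda>z. norm (u z - (z ^ Suc k) *s a) / norm z ^ Suc k) \<longlongrightarrow> 0) (at 0)"
proof -
  define q where "q = (\<lambda>z::complex. (- 1 * z ^ Suc k) *s a)"
  have q: "smooth_on U q" unfolding q_def by (rule smooth_on_monomial_smult)
  have "vanishes_to_order (Suc (Suc k)) (\<lambda>z. u z + q z) 0"
    unfolding vanishes_to_order_def
  proof (intro allI impI)
    fix ws :: "complex list"
    assume "length ws < Suc (Suc k)"
    have expand: "iter_deriv (\<lambda>z. u z + q z) ws 0 = iter_deriv u ws 0
        + (- 1 * (\<Prod>j<length ws. of_nat (Suc k - j)) * prod_list ws * 0 ^ (Suc k - length ws)) *s a"
      unfolding iter_deriv_add[OF U(1) smooth_on_imp_times_differentiable_on[OF u]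
          smooth_on_imp_times_differentiable_on[OF q] order.refl U(2)]
      by (simp only: q_def iter_deriv_monomial_smult)
    show "iter_deriv (\<lambda>z. u z + q z) ws 0 = 0"
    proof (cases "length ws = Suc k")
      case True
      have "(\<Prod>j<length ws. of_nat (Suc k - j)) = (of_nat (fact (Suc k)) :: complex)"
        unfolding True of_nat_fact by (rule prod_lessThan_diff_eq_fact)
      from expand[unfolded this top[OF True]] show ?thesis
        unfolding True by (simp add: vec_eq_iff algebra_simps)
    next
      case False
      with \<open>length ws < Suc (Suc k)\<close> have "length ws \<le> k" by simp
      then have "iter_deriv u ws 0 = 0"
        using u0 jet vanishes_to_order_Suc_iff_jet_vanishes[of k u 0]
        unfolding vanishes_to_order_def by simp
      with expand \<open>length ws \<le> k\<close> show ?thesis by simp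
    qed
  qed
  from vanishes_to_order_imp_little_o[OF U smooth_on_add[OF U(1) u q] this]
  show ?thesis by (simp add: q_def vec_eq_iff)
qed

theorem mainTheorem1:
  fixes U :: "complex set" and V :: "(complex ^ 'n) set"
    and u :: "complex \<Rightarrow> complex ^ 'n"
    and J :: "complex ^ 'n \<Rightarrow> complex ^ 'n \<Rightarrow> complex ^ 'n"
    and k :: nat
  assumes "open U" and "0 \<in> U" and "open V" and "u ` U \<subseteq> V"
    and "smooth_on U u"
    and "u 0 = 0"
    and "almost_complex_on V J"
    and "\<forall>m. J 0 (axis m 1) = axis m \<i> \<and> J 0 (axis m \<i>) = - axis m 1"
    and "J_holomorphic_on U J u"
    and "k \<ge> 1"
    and "jet_vanishes k u 0"
  shows "\<exists>a :: complex ^ 'n.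
           ((\<lambda>z. norm (u z - (z ^ Suc k) *s a) / norm z ^ Suc k) \<longlongrightarrow> 0) (at 0)
         \<and> (\<forall>vs. length vs = Suc k \<longrightarrow>
               iter_deriv u vs 0 = (of_nat (fact (Suc k)) * prod_list vs) *s a)"
proof -
  have "0 \<in> V" using assms(2,4,6) by force
  then have "linear (J 0)" using assms(7) unfolding almost_complex_on_def by blast
  then have "J 0 = (\<lambda>x. \<i> *s x)" using assms(8) by (rule linear_eq_i_smult)
  then have Ji: "J (u 0) v = \<i> *s v" for v using assms(6) by simp
  define a where "a = inverse (of_nat (fact (Suc k))) *s iter_deriv u (replicate (Suc k) 1) 0"
  have "(of_nat (fact (Suc k)) :: complex) \<noteq> 0" by (metis fact_nonzero of_nat_eq_0_iff)
  then have top: "iter_deriv u vs 0 = (of_nat (fact (Suc k)) * prod_list vs) *s a"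
    if "length vs = Suc k" for vs
    using iter_deriv_J_holomorphic_eq_prod_list[OF assms(1-5,7,9,11) Ji that]
    unfolding a_def by (simp add: vector_smult_assoc field_simps del: of_nat_fact)
  show ?thesis using little_o_of_homogeneous_jet[OF assms(1,2,5,6,11) top] top by blast
qed
end
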